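(* Let $q$ be a prime power and $k\ge3$, $u\ge2$, $h\ge1$ integers. Let $U_1,\dots,U_h$ be $u$-dimensional subspaces of $\mathbf F_q^k$ with $U_i\cap U_j=\{0\}$ for $i\ne j$, and assume $q^k-q^{k-1}>h(q^u-1)$. Let $U$ be the set of nonzero vectors of $\mathbf F_q^k$ not in $U_1\cup\dots\cup U_h$, let $\widetilde G$ be a matrix whose columns consist of exactly one representative of each class $\{\lambda\mathbf v:\lambda\in\mathbf F_q^*\}$, $\mathbf v\in U$, and let $\mathbf C$ be the linear code with generator matrix $\widetilde G$. Then the Griesmer defect of $\mathbf C$ is at most $\sum_{i=1}^{k-u}\lfloor h/q^i\rfloor$.
   Context: For a linear $[n,k,d]_q$ code, $g_q(k,d)=\sum_{i=0}^{k-1}\lceil d/q^i\rceil$ and the Griesmer defect is $n-g_q(k,d)$. *)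

theory Defs
  imports "HOL-Analysis.Analysis"
begin

text \<open>Standard bilinear form on F_q^k (F_q^k is represented as 'a^'n, k = CARD('n)).\<close>
definition dotv :: "'a::field ^ 'n \<Rightarrow> 'a ^ 'n \<Rightarrow> 'a" where
  "dotv x v = (\<Sum>i\<in>UNIV. x $ i * v $ i)"

text \<open>The linear code generated by the matrix whose columns are the entries of the list cols:
  it is the row space of the generator matrix, i.e. all words (x G) for x in F_q^k.\<close>
definition gen_code :: "('a::field ^ 'n) list \<Rightarrow> 'a list set" where
  "gen_code cols = {map (dotv x) cols | x. True}"

definition hweight :: "'a::zero list \<Rightarrow> nat" where
  "hweight c = length (filter (\<lambda>a. a \<noteq> 0) c)"

definition code_dim :: "'a::{finite,field} list set \<Rightarrow> nat" where
  "code_dim C = (THE m. card C = CARD('a) ^ m)"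

definition min_dist :: "'a::zero list set \<Rightarrow> nat" where
  "min_dist C = Min {hweight c | c. c \<in> C \<and> (\<exists>a\<in>set c. a \<noteq> 0)}"

definition griesmer :: "nat \<Rightarrow> nat \<Rightarrow> nat \<Rightarrow> nat" where
  "griesmer q k d = (\<Sum>i<k. nat \<lceil>real d / real q ^ i\<rceil>)"

definition griesmer_defect :: "nat \<Rightarrow> 'a::{finite,field} list set \<Rightarrow> int" where
  "griesmer_defect n C = int n - int (griesmer CARD('a) (code_dim C) (min_dist C))"

end

theory Submission
  imports Defs
begin

(* A nonzero functional x is nonzero on exactly (q - 1) q^(k-1) vectors of F_q^k and on at most
   (q - 1) q^(u-1) vectors of each U_i. Since the columns represent the scaling classes of the
   vectors outside the U_i, every nonzero codeword has weight at least d = q^(k-1) - h q^(u-1),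
   which is positive by the hypothesis on h; so the code has dimension k and minimum distance
   at least d. Its length is n = (q^k - 1 - h (q^u - 1)) / (q - 1), and the terms of g_q(k, d) are
   q^(k-1-i) - floor(h q^(u-1) / q^i), which add up to n - sum_(i=1..k-u) floor(h / q^i). *)

section \<open>Vector spaces over a finite field\<close>

lemma card_field_ge_2: "CARD('a::{finite,field}) \<ge> 2"
proof -
  have "card {0::'a, 1} \<le> CARD('a)" by (rule card_mono) auto
  then show ?thesis by simp
qed

lemma card_span_independent:
  fixes B :: "('a::{finite,field} ^ 'n) set"
  assumes "vec.independent B"
  shows "card (vec.span B) = CARD('a) ^ card B"
proof -
  have "finite B" using assms by (rule vec.finiteI_independent)
  then show ?thesis using assms
  proof (induction B rule: finite_induct)
    case empty
    then show ?case by simp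
  next
    case (insert b B)
    have indep: "vec.independent B" and b: "b \<notin> vec.span B"
      using insert.prems insert.hyps by (auto simp: vec.independent_insert)
    let ?g = "\<lambda>(s, c). s + c *s b"
    have "inj_on ?g (vec.span B \<times> UNIV)"
    proof (rule inj_onI, clarsimp)
      fix s c s' c'
      assume s: "s \<in> vec.span B" "s' \<in> vec.span B" and eq: "s + c *s b = s' + c' *s b"
      show "s = s' \<and> c = c'"
      proof (rule ccontr)
        assume "\<not> (s = s' \<and> c = c')"
        with eq have "c \<noteq> c'" by auto
        from eq have "(c - c') *s b = s' - s"
          by (simp add: algebra_simps)
        then have "b = inverse (c - c') *s (s' - s)"
          using \<open>c \<noteq> c'\<close> by (metis vec.scale_scale vec.scale_one left_inverse right_minus_eq)
        with s b show False by (simp add: vec.span_scale vec.span_diff)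
      qed
    qed
    moreover have "?g ` (vec.span B \<times> UNIV) = vec.span (insert b B)"
    proof (intro equalityI subsetI)
      fix x assume "x \<in> ?g ` (vec.span B \<times> UNIV)"
      then obtain s c where "s \<in> vec.span B" "x = s + c *s b" by auto
      then show "x \<in> vec.span (insert b B)"
        unfolding vec.span_breakdown_eq by (intro exI[of _ c]) simp
    next
      fix x assume "x \<in> vec.span (insert b B)"
      then obtain c where "x - c *s b \<in> vec.span B" by (auto simp: vec.span_breakdown_eq)
      then show "x \<in> ?g ` (vec.span B \<times> UNIV)" by (intro image_eqI[of _ _ "(x - c *s b, c)"]) auto
    qed
    ultimately have "card (vec.span (insert b B)) = card (vec.span B \<times> (UNIV :: 'a set))"
      using card_image by fastforce
    also have "\<dots> = CARD('a) ^ card (insert b B)"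
      using insert.IH[OF indep] insert.hyps by (simp add: card_cartesian_product)
    finally show ?case .
  qed
qed

lemma card_subspace:
  fixes S :: "('a::{finite,field} ^ 'n) set"
  assumes "vec.subspace S"
  shows "card S = CARD('a) ^ vec.dim S"
proof -
  obtain B where B: "B \<subseteq> S" "vec.independent B" "S \<subseteq> vec.span B" "card B = vec.dim S"
    by (rule vec.basis_exists)
  then have "vec.span B = S" using assms by (intro vec.span_subspace) auto
  with B show ?thesis using card_span_independent by metis
qed

lemma subspace_scale_iff:
  fixes S :: "('a::field ^ 'n) set"
  assumes "vec.subspace S" "c \<noteq> 0"
  shows "c *s v \<in> S \<longleftrightarrow> v \<in> S"
  using assms vec.subspace_scale[where S = S and c = "inverse c" and x = "c *s v"]
  by (auto simp: vec.subspace_scale vec.scale_scale)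

lemma dotv_add [simp]: "dotv x (v + w) = dotv x v + dotv x w"
  by (simp add: dotv_def algebra_simps sum.distrib)

lemma dotv_diff [simp]: "dotv x (v - w) = dotv x v - dotv x w"
  by (simp add: dotv_def algebra_simps sum_subtractf)

lemma dotv_scale [simp]: "dotv x (c *s v) = c * dotv x v"
  by (simp add: dotv_def sum_distrib_left algebra_simps)

lemma dotv_zero [simp]: "dotv x 0 = 0"
  by (simp add: dotv_def)

lemma dotv_diff_left: "dotv (x - y) v = dotv x v - dotv y v"
  by (simp add: dotv_def algebra_simps sum_subtractf)

lemma dotv_axis: "dotv x (axis i 1) = x $ i"
  by (simp add: dotv_def axis_def if_distrib cong: if_cong)

lemma card_nonzero_dotv_subspace:
  fixes S :: "('a::{finite,field} ^ 'n) set"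
  assumes S: "vec.subspace S" and s: "s \<in> S" "dotv x s \<noteq> 0"
  shows "card {v\<in>S. dotv x v \<noteq> 0} * CARD('a) = (CARD('a) - 1) * card S"
proof -
  define t where "t = inverse (dotv x s) *s s"
  have t: "t \<in> S" "dotv x t = 1"
    using s by (simp_all add: t_def vec.subspace_scale[OF S])
  define K where "K = {v\<in>S. dotv x v = 0}"
  let ?g = "\<lambda>(k, c). k + c *s t"
  \<comment> \<open>Each fibre of dotv x on S is a translate of the kernel K.\<close>
  have card_fibres: "card {v\<in>S. dotv x v \<in> A} = card K * card A" for A
  proof -
    have inj: "inj_on ?g (K \<times> A)"
    proof (rule inj_onI, clarsimp)
      fix k c k' c' assume "k \<in> K" "k' \<in> K" and eq: "k + c *s t = k' + c' *s t"
      then have "dotv x (k + c *s t) = dotv x (k' + c' *s t)" by simp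
      then have "c = c'" using \<open>k \<in> K\<close> \<open>k' \<in> K\<close> t by (simp add: K_def)
      then show "k = k' \<and> c = c'" using eq by simp
    qed
    have image: "?g ` (K \<times> A) = {v\<in>S. dotv x v \<in> A}"
    proof (intro equalityI subsetI)
      fix v assume "v \<in> ?g ` (K \<times> A)"
      then show "v \<in> {v\<in>S. dotv x v \<in> A}"
        using t S by (auto simp: K_def vec.subspace_add vec.subspace_scale)
    next
      fix v assume v: "v \<in> {v\<in>S. dotv x v \<in> A}"
      then have "v - dotv x v *s t \<in> K"
        using t S by (auto simp: K_def vec.subspace_diff vec.subspace_scale)
      with v show "v \<in> ?g ` (K \<times> A)"
        by (intro image_eqI[of _ _ "(v - dotv x v *s t, dotv x v)"]) auto
    qed
    show ?thesis
      using card_image[OF inj] unfolding image card_cartesian_product .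
  qed
  have "card S = card K * CARD('a)" using card_fibres[of UNIV] by simp
  moreover have "card {v\<in>S. dotv x v \<noteq> 0} = card K * (CARD('a) - 1)"
    using card_fibres[of "UNIV - {0}"] by (simp add: card_Diff_subset)
  ultimately show ?thesis by simp
qed

lemma card_nonzero_dotv_subspace_le:
  fixes S :: "('a::{finite,field} ^ 'n) set"
  assumes "vec.subspace S"
  shows "card {v\<in>S. dotv x v \<noteq> 0} * CARD('a) \<le> (CARD('a) - 1) * card S"
proof (cases "\<exists>s\<in>S. dotv x s \<noteq> 0")
  case True
  then obtain s where "s \<in> S" "dotv x s \<noteq> 0" by blast
  from card_nonzero_dotv_subspace[OF assms this] show ?thesis by (rule eq_imp_le)
next
  case False
  then have "{v\<in>S. dotv x v \<noteq> 0} = {}" by auto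
  then show ?thesis by (simp only: card.empty mult_0 zero_le)
qed

section \<open>Vectors outside a family of subspaces\<close>

definition outside_subspaces :: "('i \<Rightarrow> 'v::zero set) \<Rightarrow> 'i set \<Rightarrow> 'v set" where
  "outside_subspaces Us I = {v. v \<noteq> 0 \<and> (\<forall>i\<in>I. v \<notin> Us i)}"

lemma scale_mem_outside_subspaces:
  fixes Us :: "'i \<Rightarrow> ('a::field ^ 'n) set"
  assumes "\<And>i. i \<in> I \<Longrightarrow> vec.subspace (Us i)" "c \<noteq> 0" "v \<in> outside_subspaces Us I"
  shows "c *s v \<in> outside_subspaces Us I"
  using assms by (auto simp: outside_subspaces_def subspace_scale_iff)

lemma card_outside_subspaces:
  fixes Us :: "'i \<Rightarrow> ('a::{finite,field} ^ 'n) set"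
  assumes "finite I"
    and sub: "\<And>i. i \<in> I \<Longrightarrow> vec.subspace (Us i) \<and> vec.dim (Us i) = u"
    and disj: "\<And>i j. i \<in> I \<Longrightarrow> j \<in> I \<Longrightarrow> i \<noteq> j \<Longrightarrow> Us i \<inter> Us j = {0}"
  shows "card (outside_subspaces Us I) = CARD('a) ^ CARD('n) - 1 - card I * (CARD('a) ^ u - 1)"
proof -
  define W where "W = (\<Union>i\<in>I. Us i - {0})"
  have "card W = (\<Sum>i\<in>I. card (Us i - {0}))"
    unfolding W_def using \<open>finite I\<close> disj by (intro card_UN_disjoint) auto
  also have "\<dots> = card I * (CARD('a) ^ u - 1)"
    using sub by (simp add: card_Diff_subset card_subspace vec.subspace_0)
  finally have "card W = card I * (CARD('a) ^ u - 1)" .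
  moreover have "outside_subspaces Us I = (UNIV - {0}) - W" "W \<subseteq> UNIV - {0}"
    by (auto simp: outside_subspaces_def W_def)
  ultimately show ?thesis by (simp add: card_Diff_subset)
qed

lemma power_eq_mult_power_pred: "1 \<le> n \<Longrightarrow> a ^ n = a * a ^ (n - 1)"
  by (cases n) simp_all

lemma card_nonzero_dotv_outside_subspaces_ge:
  fixes Us :: "'i \<Rightarrow> ('a::{finite,field} ^ 'n) set"
  assumes "finite I" "1 \<le> u"
    and sub: "\<And>i. i \<in> I \<Longrightarrow> vec.subspace (Us i) \<and> vec.dim (Us i) = u"
    and "x \<noteq> 0"
  shows "(CARD('a) - 1) * CARD('a) ^ (CARD('n) - 1)
    \<le> card {v\<in>outside_subspaces Us I. dotv x v \<noteq> 0} + card I * ((CARD('a) - 1) * CARD('a) ^ (u - 1))"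
proof -
  let ?q = "CARD('a)" and ?N = "\<lambda>S. card {v\<in>S. dotv x v \<noteq> 0}"
  have q: "?q > 0" using card_field_ge_2 by simp
  obtain i where "x $ i \<noteq> 0" using \<open>x \<noteq> 0\<close> by (metis vec_eq_iff zero_index)
  then have "?N UNIV * ?q = (?q - 1) * ?q ^ CARD('n)"
    using card_nonzero_dotv_subspace[of UNIV "axis i 1" x] by (simp add: dotv_axis)
  then have whole: "?N UNIV = (?q - 1) * ?q ^ (CARD('n) - 1)"
    using q power_eq_mult_power_pred[of "CARD('n)" ?q] by simp
  have each: "?N (Us i) \<le> (?q - 1) * ?q ^ (u - 1)" if "i \<in> I" for i
    using card_nonzero_dotv_subspace_le[of "Us i" x] sub[OF that] q
      power_eq_mult_power_pred[OF \<open>1 \<le> u\<close>, of ?q]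
    by (simp add: card_subspace)
  have "?N UNIV
      \<le> card ({v\<in>outside_subspaces Us I. dotv x v \<noteq> 0} \<union> (\<Union>i\<in>I. {v\<in>Us i. dotv x v \<noteq> 0}))"
    by (rule card_mono) (auto simp: outside_subspaces_def)
  also have "\<dots> \<le> ?N (outside_subspaces Us I) + card (\<Union>i\<in>I. {v\<in>Us i. dotv x v \<noteq> 0})"
    by (rule card_Un_le)
  also have "card (\<Union>i\<in>I. {v\<in>Us i. dotv x v \<noteq> 0}) \<le> (\<Sum>i\<in>I. ?N (Us i))"
    using \<open>finite I\<close> by (rule card_UN_le)
  also have "(\<Sum>i\<in>I. ?N (Us i)) \<le> card I * ((?q - 1) * ?q ^ (u - 1))"
    using sum_bounded_above[OF each] by simp
  finally show ?thesis using whole by simp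
qed

lemma card_eq_card_scale_representatives:
  fixes V R :: "('a::{finite,field} ^ 'n) set"
  assumes "0 \<notin> V"
    and closed: "\<And>v c. v \<in> V \<Longrightarrow> c \<noteq> 0 \<Longrightarrow> c *s v \<in> V"
    and "R \<subseteq> V"
    and reps: "\<And>v. v \<in> V \<Longrightarrow> \<exists>!w. w \<in> R \<and> (\<exists>c. c \<noteq> 0 \<and> w = c *s v)"
  shows "card V = card R * (CARD('a) - 1)"
proof -
  let ?g = "\<lambda>(w, c). c *s w"
  have "w = w' \<and> c = c'"
    if w: "w \<in> R" "w' \<in> R" "c \<noteq> 0" "c' \<noteq> 0" and eq: "c *s w = c' *s w'" for w c w' c'
  proof
    have "c *s w \<in> V" using w \<open>R \<subseteq> V\<close> closed by blast
    moreover have "w = inverse c *s (c *s w)"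
      using \<open>c \<noteq> 0\<close> by (simp add: vec.scale_scale)
    moreover have "w' = inverse c' *s (c *s w)"
      unfolding eq using \<open>c' \<noteq> 0\<close> by (simp add: vec.scale_scale)
    ultimately show "w = w'"
      using reps[of "c *s w"] w inverse_nonzero_iff_nonzero by blast
    moreover have "w \<noteq> 0" using w \<open>R \<subseteq> V\<close> \<open>0 \<notin> V\<close> by blast
    ultimately show "c = c'" using eq by simp
  qed
  then have "inj_on ?g (R \<times> (UNIV - {0}))" by (auto intro!: inj_onI)
  moreover have "?g ` (R \<times> (UNIV - {0})) = V"
  proof (intro equalityI subsetI)
    fix v assume "v \<in> ?g ` (R \<times> (UNIV - {0}))"
    then show "v \<in> V" using \<open>R \<subseteq> V\<close> closed by auto
  next
    fix v assume "v \<in> V"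
    then obtain w c where "w \<in> R" "c \<noteq> 0" "w = c *s v" using reps by blast
    then show "v \<in> ?g ` (R \<times> (UNIV - {0}))"
      by (intro image_eqI[of _ _ "(w, inverse c)"]) (auto simp: vec.scale_scale)
  qed
  ultimately have "card V = card (R \<times> (UNIV - {0::'a}))" by (metis card_image)
  then show ?thesis by (simp add: card_cartesian_product card_Diff_subset)
qed

lemma card_filter_eq_card_scale_representatives:
  fixes V R :: "('a::{finite,field} ^ 'n) set"
  assumes "0 \<notin> V"
    and closed: "\<And>v c. v \<in> V \<Longrightarrow> c \<noteq> 0 \<Longrightarrow> c *s v \<in> V"
    and "R \<subseteq> V"
    and reps: "\<And>v. v \<in> V \<Longrightarrow> \<exists>!w. w \<in> R \<and> (\<exists>c. c \<noteq> 0 \<and> w = c *s v)"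
    and invariant: "\<And>v c. c \<noteq> 0 \<Longrightarrow> P (c *s v) \<longleftrightarrow> P v"
  shows "card {v\<in>V. P v} = card {w\<in>R. P w} * (CARD('a) - 1)"
proof (rule card_eq_card_scale_representatives)
  show "0 \<notin> {v\<in>V. P v}" "{w\<in>R. P w} \<subseteq> {v\<in>V. P v}"
    using \<open>0 \<notin> V\<close> \<open>R \<subseteq> V\<close> by auto
  show "c *s v \<in> {v\<in>V. P v}" if "v \<in> {v\<in>V. P v}" "c \<noteq> 0" for v c
    using that closed invariant by simp
  fix v assume v: "v \<in> {v\<in>V. P v}"
  then obtain w c where w: "w \<in> R" "c \<noteq> 0" "w = c *s v" using reps by blast
  show "\<exists>!w. w \<in> {w\<in>R. P w} \<and> (\<exists>c. c \<noteq> 0 \<and> w = c *s v)"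
  proof (rule ex1I[of _ w])
    show "w \<in> {w\<in>R. P w} \<and> (\<exists>c. c \<noteq> 0 \<and> w = c *s v)"
      using w v invariant by auto
    show "y = w" if "y \<in> {w\<in>R. P w} \<and> (\<exists>c. c \<noteq> 0 \<and> y = c *s v)" for y
      using reps[of v] v w that by blast
  qed
qed

section \<open>Codes generated by a list of columns\<close>

lemma hweight_map_dotv:
  assumes "distinct cols"
  shows "hweight (map (dotv x) cols) = card {w\<in>set cols. dotv x w \<noteq> 0}"
proof -
  have "hweight (map (dotv x) cols) = length (filter (\<lambda>w. dotv x w \<noteq> 0) cols)"
    by (simp add: hweight_def filter_map comp_def)
  also have "\<dots> = card {w\<in>set cols. dotv x w \<noteq> 0}"
    using assms by (simp flip: distinct_card)
  finally show ?thesis .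
qed

lemma gen_code_eq_image: "gen_code cols = (\<lambda>x. map (dotv x) cols) ` UNIV"
  by (auto simp: gen_code_def)

lemma code_dim_gen_code:
  fixes cols :: "('a::{finite,field} ^ 'n) list"
  assumes "\<And>x. x \<noteq> 0 \<Longrightarrow> 0 < hweight (map (dotv x) cols)"
  shows "code_dim (gen_code cols) = CARD('n)"
proof -
  have "inj (\<lambda>x. map (dotv x) cols)"
  proof (rule injI)
    fix x y assume "map (dotv x) cols = map (dotv y) cols"
    then have "hweight (map (dotv (x - y)) cols) = 0"
      by (simp add: hweight_def filter_map comp_def dotv_diff_left map_eq_conv)
    with assms[of "x - y"] show "x = y" by (metis less_irrefl right_minus_eq)
  qed
  then have "card (gen_code cols) = CARD('a) ^ CARD('n)"
    by (simp add: gen_code_eq_image card_image)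
  moreover have "CARD('a) ^ m = CARD('a) ^ CARD('n) \<Longrightarrow> m = CARD('n)" for m
    using card_field_ge_2[where 'a = 'a] by (simp add: power_inject_exp)
  ultimately show ?thesis
    unfolding code_dim_def by (intro the_equality) auto
qed

lemma min_dist_gen_code_ge:
  fixes cols :: "('a::{finite,field} ^ 'n) list"
  assumes "0 < d" and weight: "\<And>x. x \<noteq> 0 \<Longrightarrow> d \<le> hweight (map (dotv x) cols)"
  shows "d \<le> min_dist (gen_code cols)"
proof -
  let ?W = "{hweight c | c. c \<in> gen_code cols \<and> (\<exists>a\<in>set c. a \<noteq> 0)}"
  have "finite ?W" by (simp add: gen_code_eq_image)
  have "d \<le> w" if "w \<in> ?W" for w
  proof -
    from that obtain x where "w = hweight (map (dotv x) cols)" "\<exists>a\<in>set (map (dotv x) cols). a \<noteq> 0"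
      unfolding gen_code_eq_image by blast
    moreover from this have "x \<noteq> 0" by (auto simp: dotv_def)
    ultimately show ?thesis using weight by simp
  qed
  moreover have "?W \<noteq> {}"
  proof -
    obtain x :: "'a ^ 'n" where "x \<noteq> 0" by (metis axis_eq_0_iff one_neq_zero)
    then have "0 < hweight (map (dotv x) cols)" using weight \<open>0 < d\<close> by (meson less_le_trans)
    then have "\<exists>a\<in>set (map (dotv x) cols). a \<noteq> 0"
      by (auto simp: hweight_def filter_empty_conv)
    then show ?thesis by (auto simp: gen_code_eq_image)
  qed
  ultimately show ?thesis
    unfolding min_dist_def using \<open>finite ?W\<close> by (simp add: Min_ge_iff)
qed

lemma griesmer_mono: "d' \<le> d \<Longrightarrow> griesmer q k d' \<le> griesmer q k d"
  unfolding griesmer_def by (intro sum_mono nat_mono ceiling_mono divide_right_mono) auto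

locale outside_subspaces_code =
  fixes Us :: "'i \<Rightarrow> ('a::{finite,field} ^ 'n) set" and I :: "'i set"
    and u :: nat and cols :: "('a ^ 'n) list"
  assumes finite_I: "finite I"
    and subspaces: "\<And>i. i \<in> I \<Longrightarrow> vec.subspace (Us i) \<and> vec.dim (Us i) = u"
    and disjoint: "\<And>i j. i \<in> I \<Longrightarrow> j \<in> I \<Longrightarrow> i \<noteq> j \<Longrightarrow> Us i \<inter> Us j = {0}"
    and distinct_cols: "distinct cols"
    and cols_subset: "set cols \<subseteq> outside_subspaces Us I"
    and representatives:
      "\<And>v. v \<in> outside_subspaces Us I \<Longrightarrow> \<exists>!w. w \<in> set cols \<and> (\<exists>c. c \<noteq> 0 \<and> w = c *s v)"
begin

lemma card_filter_outside_subspaces: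
  assumes "\<And>v c. c \<noteq> 0 \<Longrightarrow> P (c *s v) \<longleftrightarrow> P v"
  shows "card {v\<in>outside_subspaces Us I. P v} = card {w\<in>set cols. P w} * (CARD('a) - 1)"
proof (rule card_filter_eq_card_scale_representatives[OF _ _ cols_subset representatives assms])
  show "0 \<notin> outside_subspaces Us I" by (simp add: outside_subspaces_def)
  show "c *s v \<in> outside_subspaces Us I" if "v \<in> outside_subspaces Us I" "c \<noteq> 0" for v c
    using scale_mem_outside_subspaces[of I Us c v] subspaces that by blast
qed

lemma length_cols:
  "length cols * (CARD('a) - 1) = CARD('a) ^ CARD('n) - 1 - card I * (CARD('a) ^ u - 1)"
  using card_filter_outside_subspaces[of "\<lambda>_. True"]
    card_outside_subspaces[OF finite_I subspaces disjoint] distinct_card[OF distinct_cols]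
  by simp

lemma hweight_ge:
  assumes "1 \<le> u" "x \<noteq> 0"
  shows "CARD('a) ^ (CARD('n) - 1) \<le> hweight (map (dotv x) cols) + card I * CARD('a) ^ (u - 1)"
proof -
  let ?q = "CARD('a)" and ?w = "hweight (map (dotv x) cols)"
  have "card {v\<in>outside_subspaces Us I. dotv x v \<noteq> 0} = ?w * (?q - 1)"
    using card_filter_outside_subspaces[of "\<lambda>v. dotv x v \<noteq> 0"] hweight_map_dotv[OF distinct_cols]
    by simp
  then have "(?q - 1) * ?q ^ (CARD('n) - 1) \<le> (?q - 1) * (?w + card I * ?q ^ (u - 1))"
    using card_nonzero_dotv_outside_subspaces_ge[where Us = Us, OF finite_I assms(1) subspaces assms(2)]
    by (simp add: distrib_left mult.commute mult.left_commute)
  then show ?thesis using card_field_ge_2[where 'a = 'a] by simp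
qed

end

section \<open>Griesmer bound arithmetic\<close>

lemma ceiling_power_diff_divide:
  fixes q j m i :: nat
  assumes "0 < q" "i \<le> j" "m \<le> q ^ j"
  shows "\<lceil>real (q ^ j - m) / real q ^ i\<rceil> = int (q ^ (j - i)) - int (m div q ^ i)"
proof -
  have ceiling_diff: "\<lceil>real_of_int z - y\<rceil> = z - \<lfloor>y\<rfloor>" for z y
    using ceiling_add_of_int[of "- y" z] by (simp add: ceiling_minus)
  have qj: "real q ^ j = real q ^ (j - i) * real q ^ i"
    using \<open>i \<le> j\<close> by (simp flip: power_add)
  have "real (q ^ j - m) / real q ^ i = real_of_int (int (q ^ (j - i))) - real m / real q ^ i"
    using assms by (simp add: of_nat_diff diff_divide_distrib qj)
  also have "\<lceil>\<dots>\<rceil> = int (q ^ (j - i)) - \<lfloor>real m / real q ^ i\<rfloor>"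
    by (rule ceiling_diff)
  finally show ?thesis using floor_divide_of_nat_eq[of m "q ^ i"] by simp
qed

lemma griesmer_power_diff:
  fixes q k m :: nat
  assumes "0 < q" "m \<le> q ^ (k - 1)"
  shows "int (griesmer q k (q ^ (k - 1) - m)) = (\<Sum>i<k. int q ^ i) - (\<Sum>i<k. int (m div q ^ i))"
proof -
  have "int (nat \<lceil>real (q ^ (k - 1) - m) / real q ^ i\<rceil>) = int q ^ (k - Suc i) - int (m div q ^ i)"
    if "i < k" for i
  proof -
    have "m div q ^ i \<le> q ^ (k - 1) div q ^ i" using assms(2) by (rule div_le_mono)
    also have "\<dots> = q ^ (k - 1 - i)" using \<open>0 < q\<close> \<open>i < k\<close> by (simp only: power_diff)
    finally show ?thesis
      using ceiling_power_diff_divide[of q i "k - 1" m] assms \<open>i < k\<close> by simp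
  qed
  then have "int (griesmer q k (q ^ (k - 1) - m)) = (\<Sum>i<k. int q ^ (k - Suc i) - int (m div q ^ i))"
    by (simp add: griesmer_def)
  also have "\<dots> = (\<Sum>i<k. int q ^ i) - (\<Sum>i<k. int (m div q ^ i))"
    by (simp add: sum_subtractf sum.nat_diff_reindex[where g = "\<lambda>i. int q ^ i"])
  finally show ?thesis .
qed

lemma sum_mult_power_div_powers:
  fixes q h u k :: nat
  assumes "0 < q" "1 \<le> u" "u \<le> k"
  shows "(\<Sum>i<k. h * q ^ (u - 1) div q ^ i) = h * (\<Sum>i<u. q ^ i) + (\<Sum>j=1..k-u. h div q ^ j)"
proof -
  have "(\<Sum>i<k. h * q ^ (u - 1) div q ^ i)
      = (\<Sum>i<u. h * q ^ (u - 1) div q ^ i) + (\<Sum>i=u..<k. h * q ^ (u - 1) div q ^ i)"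
    using sum.atLeastLessThan_concat[of 0 u k "\<lambda>i. h * q ^ (u - 1) div q ^ i"] \<open>u \<le> k\<close>
    by (simp add: atLeast0LessThan)
  also have "(\<Sum>i<u. h * q ^ (u - 1) div q ^ i) = (\<Sum>i<u. h * q ^ (u - Suc i))"
  proof (rule sum.cong)
    fix i assume "i \<in> {..<u}"
    then have "q ^ (u - 1) = q ^ (u - Suc i) * q ^ i" by (simp flip: power_add)
    then show "h * q ^ (u - 1) div q ^ i = h * q ^ (u - Suc i)" using \<open>0 < q\<close> by simp
  qed simp
  also have "\<dots> = h * (\<Sum>i<u. q ^ i)"
    by (simp add: sum_distrib_left sum.nat_diff_reindex[where g = "\<lambda>i. h * q ^ i"])
  also have "(\<Sum>i=u..<k. h * q ^ (u - 1) div q ^ i) = (\<Sum>j=1..k-u. h * q ^ (u - 1) div q ^ (j + (u - 1)))"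
    by (rule sum.reindex_bij_witness[of _ "\<lambda>j. j + (u - 1)" "\<lambda>i. i - (u - 1)"]) (use assms in auto)
  also have "\<dots> = (\<Sum>j=1..k-u. h div q ^ j)"
    using \<open>0 < q\<close> by (simp add: power_add div_mult_mult2)
  finally show ?thesis .
qed

lemma mult_power_pred_less_power_pred:
  fixes q k u h :: nat
  assumes "0 < q" "1 \<le> u" "1 \<le> k" "h * (q ^ u - 1) < q ^ k - q ^ (k - 1)"
  shows "h * q ^ (u - 1) < q ^ (k - 1)"
proof -
  have "(q - 1) * (h * q ^ (u - 1)) = h * (q ^ u - q ^ (u - 1))"
    using power_eq_mult_power_pred[OF \<open>1 \<le> u\<close>, of q] by (simp add: algebra_simps diff_mult_distrib)
  also have "\<dots> \<le> h * (q ^ u - 1)"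
    using \<open>0 < q\<close> by (intro mult_le_mono2 diff_le_mono2) simp
  also have "\<dots> < q ^ k - q ^ (k - 1)" by fact
  also have "\<dots> = (q - 1) * q ^ (k - 1)"
    using power_eq_mult_power_pred[OF \<open>1 \<le> k\<close>, of q] by (simp add: diff_mult_distrib)
  finally show ?thesis by simp
qed

lemma length_minus_griesmer_eq:
  fixes q k u h n :: nat
  assumes "2 \<le> q" "1 \<le> u" "1 \<le> k" "1 \<le> h" and below: "h * q ^ (u - 1) \<le> q ^ (k - 1)"
    and length: "n * (q - 1) = q ^ k - 1 - h * (q ^ u - 1)"
  shows "int n - int (griesmer q k (q ^ (k - 1) - h * q ^ (u - 1))) = int (\<Sum>j=1..k-u. h div q ^ j)"
proof -
  have "q ^ (u - 1) \<le> h * q ^ (u - 1)" using \<open>1 \<le> h\<close> by simp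
  then have "q ^ (u - 1) \<le> q ^ (k - 1)" using below by (rule le_trans)
  then have "u - 1 \<le> k - 1" using \<open>2 \<le> q\<close> by (simp add: power_le_imp_le_exp)
  then have "u \<le> k" using \<open>1 \<le> u\<close> \<open>1 \<le> k\<close> by arith
  have "h * q ^ u \<le> q ^ k"
    using below power_eq_mult_power_pred[OF \<open>1 \<le> u\<close>, of q]
      power_eq_mult_power_pred[OF \<open>1 \<le> k\<close>, of q]
    by simp
  then have "h * (q ^ u - 1) \<le> q ^ k - 1"
    using \<open>1 \<le> h\<close> by (simp add: diff_mult_distrib2)
  have geometric: "int q ^ m - 1 = (int q - 1) * (\<Sum>i<m. int q ^ i)" for m
    by (rule power_diff_1_eq)
  have "1 \<le> q" "1 \<le> q ^ u" "1 \<le> q ^ k" using \<open>2 \<le> q\<close> by simp_all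
  then have "int n * (int q - 1) = int q ^ k - 1 - int h * (int q ^ u - 1)"
    using arg_cong[OF length, of int] \<open>h * (q ^ u - 1) \<le> q ^ k - 1\<close>
    by (simp only: of_nat_diff of_nat_mult of_nat_power of_nat_1)
  then have "(int q - 1) * int n = (int q - 1) * ((\<Sum>i<k. int q ^ i) - int h * (\<Sum>i<u. int q ^ i))"
    unfolding geometric by (simp add: algebra_simps)
  then have "int n = (\<Sum>i<k. int q ^ i) - int h * (\<Sum>i<u. int q ^ i)"
    using \<open>2 \<le> q\<close> by simp
  moreover have "(\<Sum>i<k. int (h * q ^ (u - 1) div q ^ i))
      = int h * (\<Sum>i<u. int q ^ i) + int (\<Sum>j=1..k-u. h div q ^ j)"
    using arg_cong[OF sum_mult_power_div_powers[of q u k h], of int] assms \<open>u \<le> k\<close> by simp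
  ultimately show ?thesis
    using griesmer_power_diff[of q "h * q ^ (u - 1)" k] assms by simp
qed

theorem lemma2p2:
  fixes Us :: "nat \<Rightarrow> ('a::{finite,field} ^ 'n) set"
    and u h :: nat
    and cols :: "('a ^ 'n) list"
  defines "q \<equiv> CARD('a)"
  defines "k \<equiv> CARD('n)"
  defines "Uset \<equiv> {v :: 'a ^ 'n. v \<noteq> 0 \<and> (\<forall>i\<in>{1..h}. v \<notin> Us i)}"
  assumes k3: "k \<ge> 3" and u2: "u \<ge> 2" and h1: "h \<ge> 1"
    and sub: "\<And>i. i \<in> {1..h} \<Longrightarrow> vec.subspace (Us i) \<and> vec.dim (Us i) = u"
    and disj: "\<And>i j. i \<in> {1..h} \<Longrightarrow> j \<in> {1..h} \<Longrightarrow> i \<noteq> j \<Longrightarrow> Us i \<inter> Us j = {0}"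
    and cond: "q ^ k - q ^ (k - 1) > h * (q ^ u - 1)"
    and dist: "distinct cols"
    and cols_in: "set cols \<subseteq> Uset"
    and reps: "\<And>v. v \<in> Uset \<Longrightarrow> \<exists>!w. w \<in> set cols \<and> (\<exists>c. c \<noteq> 0 \<and> w = c *s v)"
  shows "griesmer_defect (length cols) (gen_code cols) \<le> int (\<Sum>i=1..k-u. h div q ^ i)"
proof -
  have q: "2 \<le> q" unfolding q_def by (rule card_field_ge_2)
  have below: "h * q ^ (u - 1) < q ^ (k - 1)"
    using mult_power_pred_less_power_pred[of q u k h] q u2 k3 cond by simp
  have "Uset = outside_subspaces Us {1..h}"
    by (simp add: Uset_def outside_subspaces_def)
  then interpret outside_subspaces_code Us "{1..h}" u cols
    using sub disj dist cols_in reps by unfold_locales auto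
  define d where "d = q ^ (k - 1) - h * q ^ (u - 1)"
  have "0 < d" using below by (simp add: d_def)
  have length: "length cols * (q - 1) = q ^ k - 1 - h * (q ^ u - 1)"
    using length_cols by (simp add: q_def k_def)
  have weight: "d \<le> hweight (map (dotv x) cols)" if "x \<noteq> 0" for x
    using hweight_ge[OF _ that] u2 by (simp add: d_def q_def k_def)
  have "griesmer_defect (length cols) (gen_code cols) \<le> int (length cols) - int (griesmer q k d)"
    using griesmer_mono[OF min_dist_gen_code_ge[OF \<open>0 < d\<close> weight]]
      code_dim_gen_code[of cols] weight \<open>0 < d\<close>
    by (fastforce simp: griesmer_defect_def q_def k_def)
  also have "\<dots> = int (\<Sum>i=1..k-u. h div q ^ i)"
    using length_minus_griesmer_eq[OF q _ _ h1 _ length] u2 k3 below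
    by (simp add: d_def)
  finally show ?thesis .
qed

end
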